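(* Let $\mathcal{G}=(\mathcal{V},\mathcal{E})$ be an unweighted finite simple graph and $f:\mathcal{V}\to\mathbb{R}$ a filtering function. Let $u\in\mathcal{V}$ be dominated by $v\in\mathcal{V}$, and suppose $f(u)\geq f(v)$. Then for every $k\geq 0$, $$PD_k(\mathcal{G},f)=PD_k(\mathcal{G}-\{u\},f),$$ where on the right $f$ is restricted to $\mathcal{V}\setminus\{u\}$ and the same threshold set is used.
   Context: For a vertex $w$, $N(w)=\{w\}\cup\{x: \{w,x\}\in\mathcal{E}\}$ is its closed neighborhood; $u$ is dominated by $v\neq u$ if $N(u)\subset N(v)$. $\mathcal{G}-\{u\}$ is obtained by deleting $u$ and all its incident edges. For $f:\mathcal{V}\to\mathbb{R}$, let $\alpha_0<\dots<\alpha_m$ be thresholds with $\alpha_0=\min f$, $\alpha_m=\max f$; $\mathcal{G}_i$ is the subgraph induced by $\{w: f(w)\le\alpha_i\}$ and $\widehat{\mathcal{G}}_i$ its clique (flag) complex (simplices = sets of pairwise adjacent vertices). $PD_k(\mathcal{G},f)$ is the $k$-th persistence diagram (field coefficients) of the sublevel filtration $\widehat{\mathcal{G}}_0\subset\dots\subset\widehat{\mathcal{G}}_m$; for a subgraph the same construction is applied with the restricted $f$ and the same thresholds. *)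

theory Defs
  imports Main "HOL-Library.Multiset" "HOL-Library.Extended_Real" "HOL-Library.Function_Algebras"
begin

definition simple_graph :: "'a set \<Rightarrow> 'a set set \<Rightarrow> bool" where
  "simple_graph V E \<longleftrightarrow> finite V \<and>
     (\<forall>e\<in>E. \<exists>x y. x \<noteq> y \<and> x \<in> V \<and> y \<in> V \<and> e = {x, y})"

definition closed_nbhd :: "'a set set \<Rightarrow> 'a \<Rightarrow> 'a set" where
  "closed_nbhd E w = {w} \<union> {x. {w, x} \<in> E}"

definition dominated :: "'a set \<Rightarrow> 'a set set \<Rightarrow> 'a \<Rightarrow> 'a \<Rightarrow> bool" where
  "dominated V E u v \<longleftrightarrow> u \<in> V \<and> v \<in> V \<and> v \<noteq> u \<and> closed_nbhd E u \<subseteq> closed_nbhd E v"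

definition del_vertex_V :: "'a set \<Rightarrow> 'a \<Rightarrow> 'a set" where
  "del_vertex_V V u = V - {u}"

definition del_vertex_E :: "'a set set \<Rightarrow> 'a \<Rightarrow> 'a set set" where
  "del_vertex_E E u = {e \<in> E. u \<notin> e}"

definition sublevel :: "'a set \<Rightarrow> ('a \<Rightarrow> real) \<Rightarrow> real \<Rightarrow> 'a set" where
  "sublevel V f t = {w \<in> V. f w \<le> t}"

definition clique_complex :: "'a set \<Rightarrow> 'a set set \<Rightarrow> 'a set set" where
  "clique_complex W E = {\<sigma>. \<sigma> \<noteq> {} \<and> finite \<sigma> \<and> \<sigma> \<subseteq> W \<and>
                              (\<forall>x\<in>\<sigma>. \<forall>y\<in>\<sigma>. x \<noteq> y \<longrightarrow> {x, y} \<in> E)}"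

definition filt :: "'a set \<Rightarrow> 'a set set \<Rightarrow> ('a \<Rightarrow> real) \<Rightarrow> (nat \<Rightarrow> real) \<Rightarrow> nat \<Rightarrow> 'a set set" where
  "filt V E f \<alpha> i = clique_complex (sublevel V f (\<alpha> i)) E"

text \<open>Chains are functions from (vertex sets of) simplices to the field; orientation
  is induced by the linear order on vertices.\<close>

definition chains :: "'k itself \<Rightarrow> 'a set set \<Rightarrow> nat \<Rightarrow> ('a set \<Rightarrow> 'k::field) set" where
  "chains _ K k = {c. \<forall>\<sigma>. c \<sigma> \<noteq> 0 \<longrightarrow> \<sigma> \<in> K \<and> card \<sigma> = Suc k}"

text \<open>Boundary of a k-chain (zero for k = 0, i.e. non-augmented complex).\<close>
definition bdry :: "'a set set \<Rightarrow> nat \<Rightarrow> ('a set \<Rightarrow> 'k::field) \<Rightarrow> ('a::linorder set \<Rightarrow> 'k)" where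
  "bdry K k c = (\<lambda>\<tau>. \<Sum>\<sigma> \<in> {\<sigma> \<in> K. card \<sigma> = Suc k \<and> \<tau> \<subseteq> \<sigma> \<and> \<tau> \<noteq> {} \<and> card \<tau> = k}.
       (-1) ^ card {y \<in> \<sigma>. y < the_elem (\<sigma> - \<tau>)} * c \<sigma>)"

definition cycles :: "'k itself \<Rightarrow> 'a::linorder set set \<Rightarrow> nat \<Rightarrow> ('a set \<Rightarrow> 'k::field) set" where
  "cycles F K k = {c \<in> chains F K k. bdry K k c = (\<lambda>_. 0)}"

definition boundaries :: "'k itself \<Rightarrow> 'a::linorder set set \<Rightarrow> nat \<Rightarrow> ('a set \<Rightarrow> 'k::field) set" where
  "boundaries F K k = bdry K (Suc k) ` chains F K (Suc k)"

definition fdim :: "('b \<Rightarrow> 'k::field) set \<Rightarrow> nat" where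
  "fdim S = vector_space.dim (\<lambda>(a::'k) (x::'b \<Rightarrow> 'k). (\<lambda>y. a * x y)) S"

text \<open>Persistent Betti number: rank of H_k(K) \<rightarrow> H_k(L) induced by inclusion K \<subseteq> L,
  i.e. dim (Z_k(K) + B_k(L)) - dim B_k(L).\<close>
definition pers_betti :: "'k::field itself \<Rightarrow> 'a::linorder set set \<Rightarrow> 'a set set \<Rightarrow> nat \<Rightarrow> nat" where
  "pers_betti F K L k =
     fdim {(\<lambda>x. a x + b x) | a b. a \<in> cycles F K k \<and> b \<in> boundaries F L k} - fdim (boundaries F L k)"

text \<open>beta^{i,j}_k of the filtration, with beta^{-1,j} = 0 (index i is shifted: argument i
  stands for filtration index i - 1 when used with \<open>bet\<close> below).\<close>
definition betti_ij :: "'k::field itself \<Rightarrow> 'a::linorder set \<Rightarrow> 'a set set \<Rightarrow> ('a \<Rightarrow> real)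
     \<Rightarrow> (nat \<Rightarrow> real) \<Rightarrow> nat \<Rightarrow> int \<Rightarrow> nat \<Rightarrow> int" where
  "betti_ij F V E f \<alpha> k i j =
     (if i < 0 then 0 else int (pers_betti F (filt V E f \<alpha> (nat i)) (filt V E f \<alpha> j) k))"

text \<open>Multiplicity of the point (alpha_i, alpha_j), i < j \<le> m, and of (alpha_i, \<infinity>).\<close>
definition mult_fin :: "'k::field itself \<Rightarrow> 'a::linorder set \<Rightarrow> 'a set set \<Rightarrow> ('a \<Rightarrow> real)
     \<Rightarrow> (nat \<Rightarrow> real) \<Rightarrow> nat \<Rightarrow> nat \<Rightarrow> nat \<Rightarrow> int" where
  "mult_fin F V E f \<alpha> k i j =
     betti_ij F V E f \<alpha> k (int i) (j - 1) - betti_ij F V E f \<alpha> k (int i) j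
     - betti_ij F V E f \<alpha> k (int i - 1) (j - 1) + betti_ij F V E f \<alpha> k (int i - 1) j"

definition mult_inf :: "'k::field itself \<Rightarrow> 'a::linorder set \<Rightarrow> 'a set set \<Rightarrow> ('a \<Rightarrow> real)
     \<Rightarrow> (nat \<Rightarrow> real) \<Rightarrow> nat \<Rightarrow> nat \<Rightarrow> nat \<Rightarrow> int" where
  "mult_inf F V E f \<alpha> m k i =
     betti_ij F V E f \<alpha> k (int i) m - betti_ij F V E f \<alpha> k (int i - 1) m"

text \<open>The k-th persistence diagram of the sublevel clique filtration with thresholds
  alpha_0 < ... < alpha_m, as a multiset of (birth, death) points (death may be \<infinity>);
  diagonal points are omitted.\<close>
definition PD :: "'k::field itself \<Rightarrow> nat \<Rightarrow> 'a::linorder set \<Rightarrow> 'a set set \<Rightarrow> ('a \<Rightarrow> real)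
     \<Rightarrow> (nat \<Rightarrow> real) \<Rightarrow> nat \<Rightarrow> (real \<times> ereal) multiset" where
  "PD F k V E f \<alpha> m =
     (\<Sum>i\<in>{0..m}. \<Sum>j\<in>{i<..m}. replicate_mset (nat (mult_fin F V E f \<alpha> k i j)) (\<alpha> i, ereal (\<alpha> j)))
     + (\<Sum>i\<in>{0..m}. replicate_mset (nat (mult_inf F V E f \<alpha> m k i)) (\<alpha> i, PInfty))"

end

theory Submission
  imports Defs
begin

text \<open>
  Write \<open>K\<^sub>i\<close> for the clique complexes of the filtration. If \<open>N(u) \<subseteq> N(v)\<close> and \<open>f v \<le> f u\<close>,
  then every clique of \<open>K\<^sub>i\<close> containing \<open>u\<close> stays a clique of \<open>K\<^sub>i\<close> when \<open>v\<close> is added. Hence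
  the operator \<open>H\<close> sending a simplex \<open>\<sigma>\<close> with \<open>u \<in> \<sigma>\<close>, \<open>v \<notin> \<sigma>\<close> to \<open>\<plusminus>(\<sigma> \<union> {v})\<close> acts on
  the chains of every \<open>K\<^sub>i\<close>, and \<open>\<Phi> = id - \<partial>H - H\<partial>\<close> is a chain map, chain homotopic to the
  identity, which vanishes on simplices containing \<open>u\<close> and is the identity on chains avoiding
  \<open>u\<close>. So \<open>\<Phi>\<close> retracts \<open>Z\<^sub>k(K\<^sub>i) + B\<^sub>k(K\<^sub>j)\<close> and \<open>B\<^sub>k(K\<^sub>j)\<close> onto the corresponding spaces
  for the complexes with \<open>u\<close> deleted, with the same kernel, since whatever \<open>\<Phi>\<close> kills in
  \<open>Z\<^sub>k(K\<^sub>i) + B\<^sub>k(K\<^sub>j)\<close> is a boundary. Comparing dimensions, every persistent Betti number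
  \<open>\<beta>\<^sub>k\<^sup>i\<^sup>,\<^sup>j\<close> is unchanged, and these numbers determine the diagrams.
\<close>

section \<open>Orientation signs and the boundary operator\<close>

definition ins_sign :: "'a::linorder set \<Rightarrow> 'a \<Rightarrow> 'k::field" where
  "ins_sign s x = (-1) ^ card {y \<in> s. y < x}"

lemma ins_sign_insert:
  assumes "finite s" "a \<notin> s"
  shows "ins_sign (insert a s) x = (if a < x then - ins_sign s x else (ins_sign s x :: 'k::field))"
proof -
  have "{y \<in> insert a s. y < x} = (if a < x then insert a {y \<in> s. y < x} else {y \<in> s. y < x})"
    by auto
  then show ?thesis using assms by (simp add: ins_sign_def)
qed

lemma ins_sign_insert_self [simp]: "ins_sign (insert x s) x = ins_sign s x"
  unfolding ins_sign_def by (rule arg_cong[where f = "\<lambda>s. (-1) ^ card s"]) auto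

lemma ins_sign_Diff_self [simp]: "ins_sign (s - {x}) x = ins_sign s x"
  unfolding ins_sign_def by (rule arg_cong[where f = "\<lambda>s. (-1) ^ card s"]) auto

lemma ins_sign_square [simp]: "ins_sign s x * ins_sign s x = (1::'k::field)"
  by (simp add: ins_sign_def flip: power_add mult_2)

text \<open>The boundary of a chain, written as a sum over the vertices that extend a face: unlike
  bdry it does not depend on the complex, only on an ambient vertex set.\<close>

definition bd :: "'a::linorder set \<Rightarrow> nat \<Rightarrow> ('a set \<Rightarrow> 'k::field) \<Rightarrow> 'a set \<Rightarrow> 'k" where
  "bd V k c t =
     (if finite t \<and> t \<noteq> {} \<and> card t = k then \<Sum>w\<in>V - t. ins_sign t w * c (insert w t) else 0)"

lemma bdry_eq_bd:
  fixes c :: "'a::linorder set \<Rightarrow> 'k::field"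
  assumes V: "finite V" and XV: "\<forall>s\<in>X. s \<subseteq> V" and c: "c \<in> chains F X k"
  shows "bdry X k c = bd V k c"
proof
  fix t
  show "bdry X k c t = bd V k c t"
  proof (cases "finite t \<and> t \<noteq> {} \<and> card t = k")
    case False
    have no_cofaces: "{\<sigma> \<in> X. card \<sigma> = Suc k \<and> t \<subseteq> \<sigma> \<and> t \<noteq> {} \<and> card t = k} = {}"
      using False by (auto dest: rev_finite_subset[rotated] simp: card_ge_0_finite)
    show ?thesis using False unfolding bdry_def no_cofaces by (auto simp: bd_def)
  next
    case True
    define S where "S = {\<sigma> \<in> X. card \<sigma> = Suc k \<and> t \<subseteq> \<sigma> \<and> t \<noteq> {} \<and> card t = k}"
    define g where "g = (\<lambda>\<sigma>. (-1::'k) ^ card {y \<in> \<sigma>. y < the_elem (\<sigma> - t)} * c \<sigma>)"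
    have S_sub: "S \<subseteq> (\<lambda>w. insert w t) ` (V - t)"
    proof
      fix s assume s: "s \<in> S"
      then have "finite s" "card s = Suc k" "t \<subseteq> s" "s \<subseteq> V"
        using XV S_def card.infinite by fastforce+
      moreover from this have "card (s - t) = Suc 0"
        using True by (simp add: card_Diff_subset)
      then obtain w where "s - t = {w}" by (auto simp: card_Suc_eq)
      ultimately show "s \<in> (\<lambda>w. insert w t) ` (V - t)" by auto
    qed
    have "bdry X k c t = sum g S" by (simp add: bdry_def S_def g_def)
    also have "\<dots> = sum g ((\<lambda>w. insert w t) ` (V - t))"
    proof (rule sum.mono_neutral_left[OF _ S_sub])
      show "\<forall>s\<in>(\<lambda>w. insert w t) ` (V - t) - S. g s = 0"
        using c True by (auto simp: S_def g_def chains_def)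
    qed (use V in simp)
    also have "\<dots> = (\<Sum>w\<in>V - t. g (insert w t))"
      by (subst sum.reindex) (auto simp: inj_on_def)
    also have "\<dots> = (\<Sum>w\<in>V - t. ins_sign t w * c (insert w t))"
    proof (rule sum.cong)
      fix w assume "w \<in> V - t"
      then have "insert w t - t = {w}" by auto
      then have "g (insert w t) = ins_sign (insert w t) w * c (insert w t)"
        by (simp add: g_def ins_sign_def)
      then show "g (insert w t) = ins_sign t w * c (insert w t)" by simp
    qed simp
    finally show ?thesis using True by (simp add: bd_def)
  qed
qed

text \<open>The terms of \<open>\<partial>\<partial>\<close> indexed by the added vertices \<open>(w, x)\<close> and \<open>(x, w)\<close> cancel.\<close>

lemma bd_bd:
  fixes c :: "'a::linorder set \<Rightarrow> 'k::field"
  assumes V: "finite V"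
  shows "bd V k (bd V (Suc k) c) = 0"
proof
  fix t
  show "bd V k (bd V (Suc k) c) t = 0 t"
  proof (cases "finite t \<and> t \<noteq> {} \<and> card t = k")
    case False then show ?thesis by (auto simp add: bd_def)
  next
    case True
    define g where "g = (\<lambda>(w, x). ins_sign t w * ins_sign (insert w t) x * c (insert x (insert w t)))"
    define pairs where "pairs = Sigma (V - t) (\<lambda>w. V - insert w t)"
    define ascending where "ascending = {p \<in> pairs. fst p < snd p}"
    have fin: "finite pairs" using V by (simp add: pairs_def)
    have "bd V k (bd V (Suc k) c) t
        = (\<Sum>w\<in>V - t. \<Sum>x\<in>V - insert w t. ins_sign t w * (ins_sign (insert w t) x * c (insert x (insert w t))))"
      using True by (auto simp: bd_def sum_distrib_left intro!: sum.cong)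
    also have "\<dots> = sum g pairs"
      unfolding pairs_def g_def using V by (subst sum.Sigma) (auto simp: mult.assoc)
    also have "\<dots> = sum g ascending + sum g {p \<in> pairs. snd p < fst p}"
      unfolding ascending_def using fin
      by (subst sum.union_disjoint[symmetric]) (auto intro!: sum.cong simp: pairs_def)
    also have "sum g {p \<in> pairs. snd p < fst p} = sum (g \<circ> prod.swap) ascending"
    proof -
      have "{p \<in> pairs. snd p < fst p} = prod.swap ` ascending" unfolding ascending_def pairs_def by auto
      then show ?thesis by (simp add: sum.reindex)
    qed
    also have "sum (g \<circ> prod.swap) ascending = sum (\<lambda>p. - g p) ascending"
    proof (rule sum.cong)
      fix p assume p: "p \<in> ascending"
      obtain w x where px: "p = (w, x)" by fastforce
      then have wx: "w \<notin> t" "x \<notin> t" "w < x" using p by (auto simp: ascending_def pairs_def)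
      have "(g \<circ> prod.swap) p = ins_sign t x * ins_sign (insert x t) w * c (insert w (insert x t))"
        by (simp add: px g_def)
      also have "\<dots> = - g p"
        using wx True by (simp add: px g_def ins_sign_insert insert_commute[of w x] less_not_sym)
      finally show "(g \<circ> prod.swap) p = - g p" .
    qed simp
    finally show ?thesis by (simp add: sum_negf)
  qed
qed

lemma bd_0: "bd V 0 c = 0"
  by (auto simp: bd_def fun_eq_iff)

section \<open>Dimension of a retract\<close>

context vector_space
begin

lemma independent_Un_of_span_Int:
  assumes "independent B1" "independent B2" "finite B2" "span B1 \<inter> span B2 \<subseteq> {0}"
  shows "independent (B1 \<union> B2)"
proof -
  have "independent (B1 \<union> C)" if "finite C" "C \<subseteq> B2" for C
    using that
  proof (induction C rule: finite_induct)
    case empty then show ?case using assms(1) by simp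
  next
    case (insert b C)
    have "b \<notin> span (B1 \<union> C)"
    proof
      assume "b \<in> span (B1 \<union> C)"
      then obtain x y where xy: "b = x + y" "x \<in> span B1" "y \<in> span C"
        unfolding span_Un by blast
      have "span C \<subseteq> span B2" using insert.prems by (intro span_mono) blast
      then have "x \<in> span B2"
        using xy insert.prems by (metis add_diff_cancel_right' insert_subset span_base span_diff subsetD)
      then have "b \<in> span C" using xy assms(4) by auto
      moreover have "span C \<subseteq> span (B2 - {b})" using insert by (intro span_mono) blast
      ultimately show False using assms(2) insert.prems unfolding dependent_def by blast
    qed
    then show ?case using insert by (simp add: independent_insertI)
  qed
  then show ?thesis using assms(3) by blast
qed

lemma dim_sums_direct:
  assumes S: "subspace S" and T: "subspace T" and ST: "S \<inter> T \<subseteq> {0}"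
    and W: "S \<union> T \<subseteq> span W" "finite W"
  shows "dim {x + y |x y. x \<in> S \<and> y \<in> T} = dim S + dim T"
proof -
  obtain B1 where B1: "B1 \<subseteq> S" "independent B1" "S \<subseteq> span B1" "card B1 = dim S"
    by (rule basis_exists)
  obtain B2 where B2: "B2 \<subseteq> T" "independent B2" "T \<subseteq> span B2" "card B2 = dim T"
    by (rule basis_exists)
  have "B1 \<subseteq> span W" "B2 \<subseteq> span W" using B1(1) B2(1) W(1) by blast+
  then have fin: "finite B1" "finite B2"
    using independent_span_bound[OF W(2)] B1(2) B2(2) by blast+
  have span_B: "span B1 = S" "span B2 = T"
    using B1 B2 span_minimal[OF _ S] span_minimal[OF _ T] by blast+
  have "independent (B1 \<union> B2)"
    using independent_Un_of_span_Int[OF B1(2) B2(2) fin(2)] span_B ST by simp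
  moreover have "B1 \<inter> B2 = {}"
  proof -
    have "B1 \<inter> B2 \<subseteq> {0}" using B1(1) B2(1) ST by blast
    moreover have "0 \<notin> B1" using B1(2) dependent_zero by blast
    ultimately show ?thesis by blast
  qed
  moreover have "span (B1 \<union> B2) = {x + y |x y. x \<in> S \<and> y \<in> T}"
    by (simp add: span_Un span_B)
  ultimately show ?thesis
    using B1(4) B2(4) fin card_Un_disjoint dim_span_eq_card_independent by metis
qed

text \<open>Rank--nullity for a retraction \<open>P\<close> of \<open>S\<close> onto \<open>S'\<close>, without finite dimensionality of
  the ambient space.\<close>

lemma dim_retraction:
  assumes P: "Vector_Spaces.linear (*s) (*s) P"
    and S: "subspace S" "S \<subseteq> span W" "finite W"
    and PS: "P ` S \<subseteq> S'" "S' \<subseteq> S" "\<forall>x\<in>S'. P x = x"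
  shows "dim S = dim S' + dim {x \<in> S. P x = 0}"
proof -
  interpret P: Vector_Spaces.linear "(*s)" "(*s)" P by (fact P)
  have "S' = P ` S" using PS by force
  then have "subspace S'" using P.subspace_image S by blast
  moreover have "subspace {x \<in> S. P x = 0}"
    using subspace_inter[OF S(1) P.subspace_kernel] by (simp add: Int_def)
  moreover have S_sum: "S = {x + y |x y. x \<in> S' \<and> y \<in> {x \<in> S. P x = 0}}"
  proof (intro equalityI subsetI)
    fix x assume "x \<in> S"
    then have "P x \<in> S'" using PS by blast
    then have "x - P x \<in> S" "P (x - P x) = 0"
      using PS \<open>x \<in> S\<close> subspace_diff[OF S(1)] by (auto simp: P.diff)
    moreover have "x = P x + (x - P x)" by simp
    ultimately show "x \<in> {x + y |x y. x \<in> S' \<and> y \<in> {x \<in> S. P x = 0}}"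
      using \<open>P x \<in> S'\<close> by blast
  qed (use PS subspace_add[OF S(1)] in blast)
  moreover have "S' \<inter> {x \<in> S. P x = 0} \<subseteq> {0}" using PS by auto
  ultimately have "dim {x + y |x y. x \<in> S' \<and> y \<in> {x \<in> S. P x = 0}} = dim S' + dim {x \<in> S. P x = 0}"
    using PS S by (intro dim_sums_direct) auto
  then show ?thesis using S_sum by simp
qed

lemma dim_diff_retraction:
  assumes P: "Vector_Spaces.linear (*s) (*s) P"
    and A: "subspace A" "A \<subseteq> span W" "finite W" and B: "subspace B" "B \<subseteq> A"
    and PA: "P ` A \<subseteq> A'" "A' \<subseteq> A" and PB: "P ` B \<subseteq> B'" "B' \<subseteq> B" "B' \<subseteq> A'"
    and P_id: "\<forall>x\<in>A'. P x = x" and ker: "{x \<in> A. P x = 0} \<subseteq> B"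
  shows "dim A - dim B = dim A' - dim B'"
proof -
  have "{x \<in> A. P x = 0} = {x \<in> B. P x = 0}" using ker B(2) by blast
  moreover have "dim A = dim A' + dim {x \<in> A. P x = 0}"
    using dim_retraction[OF P A PA P_id] .
  moreover have "dim B = dim B' + dim {x \<in> B. P x = 0}"
    using dim_retraction[OF P B(1) _ A(3) PB(1,2)] B(2) A(2) PB(3) P_id by blast
  ultimately show ?thesis by simp
qed

end

section \<open>Chains, cycles and boundaries\<close>

interpretation fun_vs: vector_space "\<lambda>(a::'k::field) (x::'b \<Rightarrow> 'k) y. a * x y"
  by unfold_locales (auto simp: fun_eq_iff algebra_simps)

interpretation fun_vsp: vector_space_pair
  "\<lambda>(a::'k::field) (x::'b \<Rightarrow> 'k) y. a * x y" "\<lambda>(a::'k::field) (x::'c \<Rightarrow> 'k) y. a * x y"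
  by unfold_locales

abbreviation fun_linear :: "(('b \<Rightarrow> 'k::field) \<Rightarrow> 'c \<Rightarrow> 'k) \<Rightarrow> bool" where
  "fun_linear \<equiv> Vector_Spaces.linear (\<lambda>a x y. a * x y) (\<lambda>a x y. a * x y)"

lemma fun_linearI:
  assumes "\<And>x y. f (x + y) = f x + f y" and "\<And>c x. f (\<lambda>y. c * x y) = (\<lambda>y. c * f x y)"
  shows "fun_linear f"
  unfolding Vector_Spaces.linear_iff by (intro conjI allI fun_vs.vector_space_axioms assms)

lemma fun_sum_apply: "sum g A y = (\<Sum>x\<in>A. g x y)"
  by (induction A rule: infinite_finite_induct) auto

lemma linear_bd: "fun_linear (bd V k)"
  by (rule fun_linearI)
    (auto simp: bd_def fun_eq_iff sum.distrib distrib_left sum_distrib_left mult.left_commute)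

lemmas bd_diff = fun_vsp.linear_diff[OF linear_bd]
  and bd_zero = fun_vsp.linear_0[OF linear_bd]

definition simplicial_complex :: "'a set \<Rightarrow> 'a set set \<Rightarrow> bool" where
  "simplicial_complex V X \<longleftrightarrow>
     (\<forall>s\<in>X. finite s \<and> s \<subseteq> V \<and> s \<noteq> {}) \<and> (\<forall>s\<in>X. \<forall>t. t \<subseteq> s \<and> t \<noteq> {} \<longrightarrow> t \<in> X)"

definition cone_closed :: "'a \<Rightarrow> 'a \<Rightarrow> 'a set set \<Rightarrow> bool" where
  "cone_closed u v X \<longleftrightarrow> (\<forall>s\<in>X. u \<in> s \<longrightarrow> insert v s \<in> X)"

lemma simplicial_complexD:
  assumes "simplicial_complex V X" "s \<in> X"
  shows "finite s" "s \<subseteq> V" "t \<subseteq> s \<Longrightarrow> t \<noteq> {} \<Longrightarrow> t \<in> X"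
  using assms unfolding simplicial_complex_def by blast+

lemma cone_closedD: "cone_closed u v X \<Longrightarrow> s \<in> X \<Longrightarrow> u \<in> s \<Longrightarrow> insert v s \<in> X"
  by (simp add: cone_closed_def)

lemma chains_mono: "X \<subseteq> Y \<Longrightarrow> chains F X k \<subseteq> chains F Y k"
  by (auto simp: chains_def)

lemma chains_card: "c \<in> chains F X k \<Longrightarrow> c s \<noteq> 0 \<Longrightarrow> finite s \<and> card s = Suc k"
  by (auto simp: chains_def card_ge_0_finite)

lemma chains_del_vanish: "c \<in> chains F {s \<in> X. u \<notin> s} k \<Longrightarrow> u \<in> s \<Longrightarrow> c s = 0"
  by (auto simp: chains_def)

lemma subspace_chains: "fun_vs.subspace (chains F X k)"
proof -
  have "chains F X k = {c. \<forall>\<sigma>. \<not> (\<sigma> \<in> X \<and> card \<sigma> = Suc k) \<longrightarrow> c \<sigma> = 0}"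
    by (auto simp: chains_def)
  then show ?thesis by (simp add: fun_vs.subspace_def)
qed

lemma chains_subset_span:
  fixes F :: "'k::field itself"
  assumes "finite L"
  shows "chains F L k \<subseteq> fun_vs.span ((\<lambda>s t. if t = s then (1::'k) else 0) ` L)"
proof
  fix c assume c: "c \<in> chains F L k"
  let ?e = "\<lambda>s t. if t = s then (1::'k) else 0"
  have "c = (\<Sum>s\<in>L. (\<lambda>t. c s * ?e s t))"
  proof
    fix t
    have "(\<Sum>s\<in>L. (\<lambda>t. c s * ?e s t)) t = (if t \<in> L then c t else 0)"
      using assms by (simp add: fun_sum_apply if_distrib[of "\<lambda>x. c _ * x"] cong: if_cong)
    then show "c t = (\<Sum>s\<in>L. (\<lambda>t. c s * ?e s t)) t" using c by (auto simp: chains_def)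
  qed
  also have "\<dots> \<in> fun_vs.span (?e ` L)"
    by (intro fun_vs.span_sum fun_vs.span_scale[where x = "?e _", simplified] fun_vs.span_base) blast
  finally show "c \<in> fun_vs.span (?e ` L)" .
qed

lemma bd_chains:
  assumes X: "simplicial_complex V X" and c: "c \<in> chains F X (Suc k)"
  shows "bd V (Suc k) c \<in> chains F X k"
  unfolding chains_def
proof (intro CollectI allI impI)
  fix t assume nz: "bd V (Suc k) c t \<noteq> 0"
  have t: "finite t \<and> t \<noteq> {} \<and> card t = Suc k"
    using nz unfolding bd_def by (rule contrapos_np) auto
  then have "(\<Sum>w\<in>V - t. ins_sign t w * c (insert w t)) \<noteq> 0"
    using nz by (simp add: bd_def)
  then obtain w where "ins_sign t w * c (insert w t) \<noteq> 0"
    by (meson sum.not_neutral_contains_not_neutral)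
  then have "c (insert w t) \<noteq> 0" by auto
  then have "insert w t \<in> X" using c unfolding chains_def by blast
  then have "t \<in> X" using simplicial_complexD(3)[OF X] t by blast
  then show "t \<in> X \<and> card t = Suc k" using t by simp
qed

lemma simplicial_complex_del: "simplicial_complex V X \<Longrightarrow> simplicial_complex V {s \<in> X. u \<notin> s}"
  unfolding simplicial_complex_def by auto

lemma cycles_eq_bd:
  fixes F :: "'k::field itself"
  assumes "finite V" "simplicial_complex V X"
  shows "cycles F X k = {c \<in> chains F X k. bd V k c = 0}"
proof -
  have "bdry X k c = bd V k c" if "c \<in> chains F X k" for c :: "'a set \<Rightarrow> 'k"
    using bdry_eq_bd[OF assms(1) _ that] simplicial_complexD(2)[OF assms(2)] by blast
  then show ?thesis by (auto simp: cycles_def zero_fun_def)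
qed

lemma boundaries_eq_bd:
  fixes F :: "'k::field itself"
  assumes "finite V" "simplicial_complex V X"
  shows "boundaries F X k = bd V (Suc k) ` chains F X (Suc k)"
proof -
  have "bdry X (Suc k) c = bd V (Suc k) c" if "c \<in> chains F X (Suc k)" for c :: "'a set \<Rightarrow> 'k"
    using bdry_eq_bd[OF assms(1) _ that] simplicial_complexD(2)[OF assms(2)] by blast
  then show ?thesis by (simp add: boundaries_def cong: image_cong)
qed

lemma subspace_cycles:
  fixes F :: "'k::field itself"
  assumes "finite V" "simplicial_complex V X"
  shows "fun_vs.subspace (cycles F X k)"
proof -
  have "cycles F X k = chains F X k \<inter> {c. bd V k c = 0}"
    using cycles_eq_bd[OF assms] by blast
  then show ?thesis
    using fun_vs.subspace_inter[OF subspace_chains fun_vsp.linear_subspace_kernel[OF linear_bd]]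
    by simp
qed

lemma subspace_boundaries:
  fixes F :: "'k::field itself"
  assumes "finite V" "simplicial_complex V X"
  shows "fun_vs.subspace (boundaries F X k)"
  unfolding boundaries_eq_bd[OF assms] by (rule fun_vsp.linear_subspace_image[OF linear_bd subspace_chains])

lemma boundaries_subset_chains:
  fixes F :: "'k::field itself"
  assumes "finite V" "simplicial_complex V X"
  shows "boundaries F X k \<subseteq> chains F X k"
  using boundaries_eq_bd[OF assms, where F=F and k=k] bd_chains[OF assms(2)] by auto

lemma cycles_mono:
  fixes F :: "'k::field itself"
  assumes "finite V" "simplicial_complex V X" "simplicial_complex V Y" "X \<subseteq> Y"
  shows "cycles F X k \<subseteq> cycles F Y k"
  using chains_mono[OF assms(4), where F=F and k=k]
    cycles_eq_bd[OF assms(1,2), where F=F and k=k] cycles_eq_bd[OF assms(1,3), where F=F and k=k]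
  by auto

lemma boundaries_mono:
  fixes F :: "'k::field itself"
  assumes "finite V" "simplicial_complex V X" "simplicial_complex V Y" "X \<subseteq> Y"
  shows "boundaries F X k \<subseteq> boundaries F Y k"
  using chains_mono[OF assms(4), where F=F and k="Suc k"] boundaries_eq_bd[OF assms(1,2), where F=F and k=k]
    boundaries_eq_bd[OF assms(1,3), where F=F and k=k]
  by auto

lemma cycles_plus_boundaries_subset_chains:
  fixes F :: "'k::field itself"
  assumes V: "finite V" and XY: "simplicial_complex V X" "simplicial_complex V Y" "X \<subseteq> Y"
  shows "{a + b |a b. a \<in> cycles F X k \<and> b \<in> boundaries F Y k} \<subseteq> chains F Y k"
proof
  fix x assume "x \<in> {a + b |a b. a \<in> cycles F X k \<and> b \<in> boundaries F Y k}"
  then obtain a b where ab: "a \<in> cycles F X k" "b \<in> boundaries F Y k" "x = a + b" by blast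
  have "a \<in> chains F Y k"
    using cycles_mono[OF V XY] ab(1) unfolding cycles_def by blast
  moreover have "b \<in> chains F Y k" using boundaries_subset_chains[OF V XY(2)] ab(2) by blast
  ultimately show "x \<in> chains F Y k"
    unfolding ab(3) by (rule fun_vs.subspace_add[OF subspace_chains])
qed

lemma simplicial_complex_finite: "finite V \<Longrightarrow> simplicial_complex V X \<Longrightarrow> finite X"
  by (rule finite_subset[of X "Pow V"]) (auto dest: simplicial_complexD(2))

lemma boundaries_subset_cycles_plus_boundaries:
  fixes F :: "'k::field itself"
  assumes "finite V" "simplicial_complex V X"
  shows "boundaries F Y k \<subseteq> {a + b |a b. a \<in> cycles F X k \<and> b \<in> boundaries F Y k}"
proof
  fix b assume "b \<in> boundaries F Y k"
  moreover have "0 \<in> cycles F X k" by (rule fun_vs.subspace_0[OF subspace_cycles[OF assms]])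
  moreover have "b = 0 + b" by simp
  ultimately show "b \<in> {a + b |a b. a \<in> cycles F X k \<and> b \<in> boundaries F Y k}" by blast
qed

lemma pers_betti_eq_dim:
  "pers_betti F K L k = fun_vs.dim {a + b |a b. a \<in> cycles F K k \<and> b \<in> boundaries F L k}
     - fun_vs.dim (boundaries F L k)"
  by (simp add: pers_betti_def fdim_def plus_fun_def)

section \<open>Collapsing a vertex onto another\<close>

text \<open>\<open>cone u v\<close> is the operator \<open>H\<close> and \<open>collapse\<close> the map \<open>\<Phi>\<close>; the coefficient of \<open>H c\<close> at a
  simplex \<open>s\<close> containing \<open>u\<close> and \<open>v\<close> is that of \<open>c\<close> at \<open>s - {v}\<close>, up to sign.\<close>

definition cone :: "'a::linorder \<Rightarrow> 'a \<Rightarrow> ('a set \<Rightarrow> 'k::field) \<Rightarrow> 'a set \<Rightarrow> 'k" where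
  "cone u v c s = (if u \<in> s \<and> v \<in> s then ins_sign s v * c (s - {v}) else 0)"

definition collapse :: "'a::linorder set \<Rightarrow> 'a \<Rightarrow> 'a \<Rightarrow> nat \<Rightarrow> ('a set \<Rightarrow> 'k::field) \<Rightarrow> 'a set \<Rightarrow> 'k"
  where "collapse V u v k c = c - bd V (Suc k) (cone u v c) - cone u v (bd V k c)"

lemma linear_cone: "fun_linear (cone u v)"
  by (rule fun_linearI) (auto simp: cone_def fun_eq_iff distrib_left mult.left_commute)

lemmas cone_zero = fun_vsp.linear_0[OF linear_cone]

lemma linear_collapse: "fun_linear (collapse V u v k)"
  by (rule fun_linearI)
    (simp_all add: collapse_def fun_eq_iff algebra_simps
      fun_vsp.linear_add[OF linear_bd] fun_vsp.linear_add[OF linear_cone]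
      fun_vsp.linear_scale[OF linear_bd] fun_vsp.linear_scale[OF linear_cone])

lemma collapse_chain_map:
  "finite V \<Longrightarrow> bd V (Suc k) (collapse V u v (Suc k) c) = collapse V u v k (bd V (Suc k) c)"
  by (simp add: collapse_def bd_diff bd_bd cone_zero)

lemma collapse_id:
  assumes "u \<noteq> v" and "\<And>s. u \<in> s \<Longrightarrow> c s = 0"
  shows "collapse V u v k c = c"
proof -
  have "cone u v c = 0" and "cone u v (bd V k c) = 0"
    using assms by (auto simp: cone_def bd_def fun_eq_iff)
  then show ?thesis by (simp add: collapse_def bd_zero)
qed

lemma cone_chains:
  assumes X: "simplicial_complex V X" "cone_closed u v X" and uv: "u \<noteq> v"
    and c: "c \<in> chains F X k"
  shows "cone u v c \<in> chains F X (Suc k)"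
  unfolding chains_def
proof (intro CollectI allI impI)
  fix s assume nz: "cone u v c s \<noteq> 0"
  have s: "u \<in> s \<and> v \<in> s" using nz unfolding cone_def by (rule contrapos_np) auto
  then have "c (s - {v}) \<noteq> 0" using nz by (simp add: cone_def)
  then have r: "s - {v} \<in> X" "card (s - {v}) = Suc k" using c unfolding chains_def by blast+
  have "u \<in> s - {v}" using s uv by simp
  then have "insert v (s - {v}) \<in> X" by (rule cone_closedD[OF X(2) r(1)])
  then have "s \<in> X" using s by (simp add: insert_absorb)
  moreover from this have "finite s" by (rule simplicial_complexD(1)[OF X(1)])
  ultimately show "s \<in> X \<and> card s = Suc (Suc k)" using r s by (simp add: card_Suc_Diff1)
qed

locale vertex_pair =
  fixes V :: "'a::linorder set" and u v :: 'a
  assumes finite_V: "finite V" and v_in_V: "v \<in> V" and u_ne_v: "u \<noteq> v"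
begin

text \<open>If \<open>v \<notin> s\<close>, only the coface \<open>insert v s\<close> contributes to \<open>(\<partial>H c)(s)\<close>, and it returns \<open>c s\<close>.\<close>

lemma collapse_vanishes_without_v:
  assumes c: "c \<in> chains F X k" and s: "u \<in> s" "v \<notin> s"
  shows "collapse V u v k c s = 0"
proof -
  have "bd V (Suc k) (cone u v c) s = c s"
  proof (cases "finite s \<and> card s = Suc k")
    case True
    have "bd V (Suc k) (cone u v c) s = (\<Sum>w\<in>V - s. ins_sign s w * cone u v c (insert w s))"
      using True s by (auto simp: bd_def)
    also have "\<dots> = (\<Sum>w\<in>V - s. if w = v then c s else 0)"
    proof (rule sum.cong)
      fix w assume "w \<in> V - s"
      show "ins_sign s w * cone u v c (insert w s) = (if w = v then c s else 0)"
      proof (cases "w = v")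
        case True
        then have "insert w s - {v} = s" using s by auto
        then show ?thesis using True s by (simp add: cone_def mult.assoc[symmetric])
      qed (use s in \<open>auto simp: cone_def\<close>)
    qed simp
    also have "\<dots> = c s" using v_in_V s finite_V by simp
    finally show ?thesis .
  next
    case False
    then show ?thesis using chains_card[OF c] by (auto simp: bd_def)
  qed
  moreover have "cone u v (bd V k c) s = 0" using s by (simp add: cone_def)
  ultimately show ?thesis by (simp add: collapse_def)
qed

text \<open>If \<open>v \<in> s\<close>, put \<open>r = s - {v}\<close>: the terms of \<open>(\<partial>H c)(s)\<close> and \<open>(H\<partial> c)(s)\<close> coming from the
  cofaces \<open>insert w r\<close>, \<open>w \<notin> s\<close>, cancel, and \<open>(H\<partial> c)(s)\<close> keeps the term \<open>c s\<close>.\<close>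

lemma collapse_vanishes_with_v:
  assumes c: "c \<in> chains F X k" and s: "u \<in> s" "v \<in> s"
  shows "collapse V u v k c s = 0"
proof -
  define r where "r = s - {v}"
  have sr: "s = insert v r" "v \<notin> r" "u \<in> r" using s u_ne_v by (auto simp: r_def)
  show ?thesis
  proof (cases "finite s \<and> card s = Suc k")
    case False
    then have "c s = 0" using chains_card[OF c] by auto
    moreover have "bd V (Suc k) (cone u v c) s = 0" using False by (auto simp: bd_def)
    moreover have "bd V k c r = 0" using False sr by (auto simp: bd_def)
    ultimately show ?thesis using s by (simp add: collapse_def cone_def r_def)
  next
    case True
    then have r: "finite r" "card r = k" "r \<noteq> {}" using sr by auto
    define \<Sigma> where "\<Sigma> = (\<Sum>w\<in>V - s. ins_sign r w * c (insert w r))"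
    have "V - r = insert v (V - s)" using sr v_in_V by auto
    then have "bd V k c r = (\<Sum>w\<in>insert v (V - s). ins_sign r w * c (insert w r))"
      using r by (simp add: bd_def)
    also have "\<dots> = ins_sign r v * c (insert v r) + \<Sigma>"
      using finite_V s(2) by (simp add: \<Sigma>_def)
    finally have "bd V k c r = ins_sign r v * c s + \<Sigma>"
      using sr(1) by simp
    moreover have "bd V (Suc k) (cone u v c) s = - (ins_sign r v * \<Sigma>)"
    proof -
      have "bd V (Suc k) (cone u v c) s = (\<Sum>w\<in>V - s. ins_sign s w * cone u v c (insert w s))"
        using True s by (auto simp: bd_def)
      also have "\<dots> = (\<Sum>w\<in>V - s. - (ins_sign r v * (ins_sign r w * c (insert w r))))"
      proof (rule sum.cong)
        fix w assume "w \<in> V - s"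
        then have w: "w \<noteq> v" "w \<notin> r" using sr by auto
        have "insert w s - {v} = insert w r" using sr w by auto
        moreover have "insert w s = insert v (insert w r)" using sr by auto
        ultimately have "ins_sign s w * cone u v c (insert w s)
            = ins_sign (insert v r) w * ins_sign (insert w r) v * c (insert w r)"
          using sr by (simp add: cone_def)
        also have "\<dots> = - (ins_sign r v * (ins_sign r w * c (insert w r)))"
          using w r sr(2) by (cases "v < w") (auto simp: ins_sign_insert less_not_sym)
        finally show "ins_sign s w * cone u v c (insert w s)
            = - (ins_sign r v * (ins_sign r w * c (insert w r)))" .
      qed simp
      finally show ?thesis by (simp add: \<Sigma>_def sum_negf sum_distrib_left)
    qed
    moreover have "cone u v (bd V k c) s = ins_sign r v * bd V k c r"
      using s by (simp add: cone_def r_def)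
    ultimately have "collapse V u v k c s = c s - (ins_sign r v * ins_sign r v) * c s"
      by (simp add: collapse_def algebra_simps)
    then show ?thesis by simp
  qed
qed

lemma collapse_vanishes:
  "c \<in> chains F X k \<Longrightarrow> u \<in> s \<Longrightarrow> collapse V u v k c s = 0"
  by (cases "v \<in> s") (simp_all add: collapse_vanishes_with_v collapse_vanishes_without_v)

lemma collapse_chains:
  assumes X: "simplicial_complex V X" "cone_closed u v X" and c: "c \<in> chains F X k"
  shows "collapse V u v k c \<in> chains F {s \<in> X. u \<notin> s} k"
proof -
  have "cone u v (bd V k c) \<in> chains F X k"
  proof (cases k)
    case 0
    then show ?thesis by (simp add: bd_0 cone_zero fun_vs.subspace_0[OF subspace_chains])
  next
    case (Suc j)
    then show ?thesis using cone_chains[OF X u_ne_v bd_chains[OF X(1)]] c by simp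
  qed
  then have "collapse V u v k c \<in> chains F X k"
    unfolding collapse_def
    by (intro fun_vs.subspace_diff[OF subspace_chains] c bd_chains[OF X(1)] cone_chains[OF X u_ne_v])
  then show ?thesis
    using collapse_vanishes[OF c] unfolding chains_def by auto
qed

lemma collapse_cycles:
  assumes X: "simplicial_complex V X" "cone_closed u v X" and z: "z \<in> cycles F X k"
  shows "collapse V u v k z \<in> cycles F {s \<in> X. u \<notin> s} k"
proof -
  have zc: "z \<in> chains F X k" "bd V k z = 0" using z cycles_eq_bd[OF finite_V X(1), where F=F and k=k] by auto
  have "bd V k (collapse V u v k z) = 0"
  proof (cases k)
    case (Suc j)
    then show ?thesis
      using zc(2) by (simp add: collapse_chain_map[OF finite_V] fun_vsp.linear_0[OF linear_collapse])
  qed (simp add: bd_0)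
  then show ?thesis
    using collapse_chains[OF X zc(1)] cycles_eq_bd[OF finite_V simplicial_complex_del[OF X(1), of u], where F=F and k=k]
    by simp
qed

lemma collapse_boundaries:
  assumes X: "simplicial_complex V X" "cone_closed u v X" and x: "x \<in> boundaries F X k"
  shows "collapse V u v k x \<in> boundaries F {s \<in> X. u \<notin> s} k"
proof -
  obtain b where b: "b \<in> chains F X (Suc k)" "x = bd V (Suc k) b"
    using x boundaries_eq_bd[OF finite_V X(1), where F=F and k=k] by auto
  then have "collapse V u v k x = bd V (Suc k) (collapse V u v (Suc k) b)"
    by (simp add: collapse_chain_map[OF finite_V])
  then show ?thesis
    using collapse_chains[OF X b(1)] boundaries_eq_bd[OF finite_V simplicial_complex_del[OF X(1), of u], where F=F and k=k]
    by simp
qed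

text \<open>On cycles \<open>id - \<Phi> = \<partial>H\<close>, and on boundaries \<open>id - \<Phi> = \<partial>(id - \<Phi>)\<close>.\<close>

lemma collapse_kernel_subset_boundaries:
  assumes K: "simplicial_complex V K" "cone_closed u v K"
    and L: "simplicial_complex V L" "cone_closed u v L" and KL: "K \<subseteq> L"
    and x: "x \<in> {a + b |a b. a \<in> cycles F K k \<and> b \<in> boundaries F L k}"
    and Px: "collapse V u v k x = 0"
  shows "x \<in> boundaries F L k"
proof -
  obtain z y where zy: "z \<in> cycles F K k" "y \<in> boundaries F L k" "x = z + y" using x by blast
  have z: "z \<in> chains F K k" "bd V k z = 0" using zy(1) cycles_eq_bd[OF finite_V K(1), where F=F and k=k] by auto
  obtain b where b: "b \<in> chains F L (Suc k)" "y = bd V (Suc k) b"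
    using zy(2) boundaries_eq_bd[OF finite_V L(1), where F=F and k=k] by auto
  have hz: "z - collapse V u v k z = bd V (Suc k) (cone u v z)"
    using z(2) by (simp add: collapse_def cone_zero)
  have hy: "y - collapse V u v k y = bd V (Suc k) (b - collapse V u v (Suc k) b)"
    using b(2) by (simp add: bd_diff collapse_chain_map[OF finite_V])
  have "x = x - collapse V u v k x" using Px by simp
  also have "\<dots> = (z - collapse V u v k z) + (y - collapse V u v k y)"
    using zy(3) by (simp add: fun_vsp.linear_add[OF linear_collapse])
  also have "\<dots> = bd V (Suc k) (cone u v z + (b - collapse V u v (Suc k) b))"
    unfolding hz hy by (rule fun_vsp.linear_add[OF linear_bd, symmetric])
  finally have x_bd: "x = bd V (Suc k) (cone u v z + (b - collapse V u v (Suc k) b))" .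
  moreover have "cone u v z \<in> chains F L (Suc k)"
    using chains_mono[OF KL] cone_chains[OF K u_ne_v z(1)] by blast
  moreover have "collapse V u v (Suc k) b \<in> chains F L (Suc k)"
    using chains_mono[of "{s \<in> L. u \<notin> s}" L] collapse_chains[OF L b(1)] by blast
  ultimately have "cone u v z + (b - collapse V u v (Suc k) b) \<in> chains F L (Suc k)"
    using b(1) by (intro fun_vs.subspace_add[OF subspace_chains] fun_vs.subspace_diff[OF subspace_chains])
  then show ?thesis
    using x_bd boundaries_eq_bd[OF finite_V L(1), where F=F and k=k] by simp
qed

lemma collapse_cycles_plus_boundaries:
  assumes K: "simplicial_complex V K" "cone_closed u v K"
    and L: "simplicial_complex V L" "cone_closed u v L"
  shows "collapse V u v k ` {a + b |a b. a \<in> cycles F K k \<and> b \<in> boundaries F L k}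
    \<subseteq> {a + b |a b. a \<in> cycles F {s \<in> K. u \<notin> s} k \<and> b \<in> boundaries F {s \<in> L. u \<notin> s} k}"
proof (rule image_subsetI)
  fix x assume "x \<in> {a + b |a b. a \<in> cycles F K k \<and> b \<in> boundaries F L k}"
  then obtain a b where ab: "a \<in> cycles F K k" "b \<in> boundaries F L k" "x = a + b" by blast
  then have "collapse V u v k x = collapse V u v k a + collapse V u v k b"
    by (simp add: fun_vsp.linear_add[OF linear_collapse])
  then show "collapse V u v k x
      \<in> {a + b |a b. a \<in> cycles F {s \<in> K. u \<notin> s} k \<and> b \<in> boundaries F {s \<in> L. u \<notin> s} k}"
    using collapse_cycles[OF K ab(1)] collapse_boundaries[OF L ab(2)] by blast
qed

lemma pers_betti_del_vertex:
  fixes F :: "'k::field itself"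
  assumes K: "simplicial_complex V K" "cone_closed u v K"
    and L: "simplicial_complex V L" "cone_closed u v L" and KL: "K \<subseteq> L"
  shows "pers_betti F K L k = pers_betti F {s \<in> K. u \<notin> s} {s \<in> L. u \<notin> s} k"
proof -
  let ?K' = "{s \<in> K. u \<notin> s}" and ?L' = "{s \<in> L. u \<notin> s}"
  let ?A = "\<lambda>K L. {a + b |a b. a \<in> cycles F K k \<and> b \<in> boundaries F L k}"
  have K': "simplicial_complex V ?K'" and L': "simplicial_complex V ?L'"
    by (rule simplicial_complex_del[OF K(1)], rule simplicial_complex_del[OF L(1)])
  have KL': "?K' \<subseteq> ?L'" using KL by blast
  have A_span: "?A K L \<subseteq> fun_vs.span ((\<lambda>s t. if t = s then (1::'k) else 0) ` L)"
    using cycles_plus_boundaries_subset_chains[OF finite_V K(1) L(1) KL]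
      chains_subset_span[OF simplicial_complex_finite[OF finite_V L(1)]] by blast
  have A_sub: "fun_vs.subspace (?A K L)"
    by (rule fun_vs.subspace_sums[OF subspace_cycles[OF finite_V K(1)] subspace_boundaries[OF finite_V L(1)]])
  have A'_A: "?A ?K' ?L' \<subseteq> ?A K L"
    using cycles_mono[OF finite_V K' K(1), where F=F and k=k]
      boundaries_mono[OF finite_V L' L(1), where F=F and k=k] by blast
  have B'_B: "boundaries F ?L' k \<subseteq> boundaries F L k"
    by (rule boundaries_mono[OF finite_V L' L(1)]) blast
  have collapse_B: "collapse V u v k ` boundaries F L k \<subseteq> boundaries F ?L' k"
    by (rule image_subsetI) (rule collapse_boundaries[OF L])
  have collapse_id_A': "\<forall>x\<in>?A ?K' ?L'. collapse V u v k x = x"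
  proof
    fix x assume "x \<in> ?A ?K' ?L'"
    then have "x \<in> chains F ?L' k"
      using cycles_plus_boundaries_subset_chains[OF finite_V K' L' KL'] by blast
    then show "collapse V u v k x = x" by (intro collapse_id u_ne_v) (rule chains_del_vanish)
  qed
  have ker: "{x \<in> ?A K L. collapse V u v k x = 0} \<subseteq> boundaries F L k"
    using collapse_kernel_subset_boundaries[OF K L KL] by blast
  show ?thesis
    unfolding pers_betti_eq_dim
    by (rule fun_vs.dim_diff_retraction[OF linear_collapse A_sub A_span
          finite_imageI[OF simplicial_complex_finite[OF finite_V L(1)]]
          subspace_boundaries[OF finite_V L(1)]
          boundaries_subset_cycles_plus_boundaries[OF finite_V K(1)]
          collapse_cycles_plus_boundaries[OF K L] A'_A collapse_B B'_B
          boundaries_subset_cycles_plus_boundaries[OF finite_V K'] collapse_id_A' ker])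
qed

end

section \<open>Sublevel clique complexes\<close>

lemma dominated_adj:
  assumes "dominated V E u v" "x \<in> closed_nbhd E u" "x \<noteq> v"
  shows "{v, x} \<in> E"
  using assms unfolding dominated_def closed_nbhd_def by auto

lemma filt_simplicial_complex: "simplicial_complex V (filt V E f \<alpha> i)"
  unfolding simplicial_complex_def filt_def clique_complex_def sublevel_def
  by (auto intro: finite_subset)

lemma filt_cone_closed:
  assumes dom: "dominated V E u v" and fuv: "f v \<le> f u"
  shows "cone_closed u v (filt V E f \<alpha> i)"
  unfolding cone_closed_def
proof (intro ballI impI)
  fix s assume s: "s \<in> filt V E f \<alpha> i" and us: "u \<in> s"
  let ?W = "sublevel V f (\<alpha> i)"
  have sW: "s \<noteq> {}" "finite s" "s \<subseteq> ?W"
    and clique: "\<And>x y. x \<in> s \<Longrightarrow> y \<in> s \<Longrightarrow> x \<noteq> y \<Longrightarrow> {x, y} \<in> E"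
    using s unfolding filt_def clique_complex_def by auto
  have "v \<in> ?W" using sW(3) us fuv dom unfolding sublevel_def dominated_def by auto
  have vx: "{v, x} \<in> E" if "x \<in> s" "x \<noteq> v" for x
  proof (rule dominated_adj[OF dom _ that(2)])
    show "x \<in> closed_nbhd E u"
      using clique[OF us that(1)] unfolding closed_nbhd_def by (cases "x = u") auto
  qed
  have "{x, y} \<in> E" if "x \<in> insert v s" "y \<in> insert v s" "x \<noteq> y" for x y
    using that vx[of x] vx[of y] clique[of x y] by (auto simp: insert_commute)
  then show "insert v s \<in> filt V E f \<alpha> i"
    using sW \<open>v \<in> ?W\<close> unfolding filt_def clique_complex_def by auto
qed

lemma filt_del_vertex:
  "filt (del_vertex_V V u) (del_vertex_E E u) f \<alpha> i = {s \<in> filt V E f \<alpha> i. u \<notin> s}"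
  unfolding filt_def clique_complex_def sublevel_def del_vertex_V_def del_vertex_E_def
  by auto

lemma filt_mono: "\<alpha> i \<le> \<alpha> j \<Longrightarrow> filt V E f \<alpha> i \<subseteq> filt V E f \<alpha> j"
  unfolding filt_def clique_complex_def sublevel_def by force

lemma betti_ij_del_vertex:
  assumes "finite V" "dominated V E u v" "f v \<le> f u" "i < 0 \<or> \<alpha> (nat i) \<le> \<alpha> j"
  shows "betti_ij F V E f \<alpha> k i j = betti_ij F (del_vertex_V V u) (del_vertex_E E u) f \<alpha> k i j"
proof -
  interpret vertex_pair V u v
    using assms(1,2) by unfold_locales (auto simp: dominated_def)
  show ?thesis
    using assms(4) pers_betti_del_vertex[OF filt_simplicial_complex filt_cone_closed[OF assms(2,3)]
        filt_simplicial_complex filt_cone_closed[OF assms(2,3)] filt_mono]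
    by (auto simp: betti_ij_def filt_del_vertex)
qed

lemma step_less_imp_le:
  fixes \<alpha> :: "nat \<Rightarrow> 'b::order"
  assumes "\<forall>i<m. \<alpha> i < \<alpha> (Suc i)" "i \<le> j" "j \<le> m"
  shows "\<alpha> i \<le> \<alpha> j"
  using assms(2,3)
proof (induction j rule: dec_induct)
  case (step n)
  then show ?case using assms(1) order.trans[of "\<alpha> i" "\<alpha> n"] by (simp add: less_imp_le)
qed simp

theorem theorem2:
  fixes V :: "'a::linorder set" and E :: "'a set set" and f :: "'a \<Rightarrow> real"
    and \<alpha> :: "nat \<Rightarrow> real" and m :: nat and u v :: 'a and F :: "'k::field itself"
  assumes "simple_graph V E"
    and "V \<noteq> {}"
    and "\<forall>i<m. \<alpha> i < \<alpha> (Suc i)"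
    and "\<alpha> 0 = Min (f ` V)" and "\<alpha> m = Max (f ` V)"
    and "dominated V E u v"
    and "f u \<ge> f v"
  shows "\<forall>k. PD F k V E f \<alpha> m = PD F k (del_vertex_V V u) (del_vertex_E E u) f \<alpha> m"
proof
  fix k
  have "finite V" using assms(1) by (simp add: simple_graph_def)
  have betti: "betti_ij F V E f \<alpha> k i j = betti_ij F (del_vertex_V V u) (del_vertex_E E u) f \<alpha> k i j"
    if "i \<le> int j" "j \<le> m" for i j
    using that step_less_imp_le[OF assms(3), of "nat i" j]
    by (intro betti_ij_del_vertex[OF \<open>finite V\<close> assms(6,7)]) auto
  show "PD F k V E f \<alpha> m = PD F k (del_vertex_V V u) (del_vertex_E E u) f \<alpha> m"
    unfolding PD_def mult_fin_def mult_inf_def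
    by (intro arg_cong2[where f = "(+)"] sum.cong refl) (auto simp: betti)
qed

end
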